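(* Let $n\ge 2$ be an integer and $\Pi_1,\Pi_4>0$. Let $\mathbb{D}^2$ be the $n\times n$ circulant matrix with first row $(-2,1,0,\ldots,0,1)$, and let $A=\begin{bmatrix}0&I\\ \mathbb{D}^2&0\end{bmatrix}$, $B=\begin{bmatrix}0\\ I\end{bmatrix}$, $C=\begin{bmatrix}\Pi_4 I&0\end{bmatrix}$. Consider the (deterministic) Kalman filtering problem for $$\frac{d}{d\tau}\boldsymbol{\Psi}(\tau)=A\boldsymbol{\Psi}(\tau)+B\boldsymbol{\rho}(\tau),\qquad \boldsymbol{\gamma}(\tau)=C\boldsymbol{\Psi}(\tau)+\boldsymbol{\eta}(\tau),$$ with $\boldsymbol{\Psi}(\tau)\in\mathbb{R}^{2n}$, $\boldsymbol{\rho}(\tau),\boldsymbol{\eta}(\tau)\in\mathbb{R}^n$, and cost $\int_0^\infty \boldsymbol{\eta}^T\big(I-\Pi_1\mathbb{D}^2\big)\boldsymbol{\eta}+\boldsymbol{\rho}^T\boldsymbol{\rho}\,d\tau$. Then the optimal Kalman filter gain is $L=\begin{bmatrix}L_1\\ L_2\end{bmatrix}$ with circulant matrices $$L_1=F^{-1}\mathrm{diag}\Big(\sqrt{\tfrac{2}{\Pi_4}\hat{L}_0(\kappa)}\Big)F,\qquad L_2=F^{-1}\mathrm{diag}\big(\hat{L}_0(\kappa)\big)F,$$ where, for $\kappa\in\{0,\ldots,n-1\}$, $$\hat{L}_0(\kappa)=\frac{\hat{D}_{\kappa\kappa}}{\Pi_4}+\sqrt{\frac{\hat{D}_{\kappa\kappa}^2}{\Pi_4^2}-\Pi_1\hat{D}_{\kappa\kappa}+1},\qquad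 \hat{D}_{\kappa\kappa}=-4\sin^2\!\left(\frac{\pi\kappa}{n}\right).$$ Equivalently, $\hat{L}(\kappa)=\begin{bmatrix}\sqrt{\tfrac{2}{\Pi_4}\hat{L}_0(\kappa)}&\hat{L}_0(\kappa)\end{bmatrix}^T$.
   Context: $F$ denotes the $n\times n$ unitary discrete Fourier transform matrix, $F_{kj}=n^{-1/2}e^{-2\pi i kj/n}$, $k,j\in\{0,\ldots,n-1\}$; $\mathrm{diag}(f(\kappa))$ is the diagonal matrix with $\kappa$-th diagonal entry $f(\kappa)$. For the filtering problem with cost $\int\boldsymbol{\eta}^TW\boldsymbol{\eta}+\boldsymbol{\rho}^T\boldsymbol{\rho}$, the optimal Kalman filter gain is $L=SC^TW$, where $S$ is the symmetric positive definite (stabilizing) solution of $AS+SA^T+BB^T-SC^TWCS=0$, and the estimator is $\frac{d}{d\tau}\tilde{\boldsymbol{\Psi}}=(A-LC)\tilde{\boldsymbol{\Psi}}+L\boldsymbol{\gamma}$; here $W=I-\Pi_1\mathbb{D}^2$. Equivalently (stochastic formulation), $\boldsymbol{\rho},\boldsymbol{\eta}$ are uncorrelated zero-mean Gaussian white noises with covariances $I$ and $(I-\Pi_1\mathbb{D}^2)^{-1}$. *)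

theory Defs
  imports "Jordan_Normal_Form.Char_Poly" "Jordan_Normal_Form.Gauss_Jordan_Elimination"
begin

(* periodic second-difference matrix: circulant with first row (-2,1,0,...,0,1);
   for n = 2 the two off-diagonal contributions add up *)
definition D2 :: "nat \<Rightarrow> real mat" where
  "D2 n = mat n n (\<lambda>(i,j). (if j = (i + 1) mod n then 1 else 0)
                         + (if j = (i + n - 1) mod n then 1 else 0)
                         - (if i = j then 2 else 0))"

definition sysA :: "nat \<Rightarrow> real mat" where
  "sysA n = four_block_mat (0\<^sub>m n n) (1\<^sub>m n) (D2 n) (0\<^sub>m n n)"

definition sysB :: "nat \<Rightarrow> real mat" where
  "sysB n = (0\<^sub>m n n) @\<^sub>r (1\<^sub>m n)"

definition sysC :: "nat \<Rightarrow> real \<Rightarrow> real mat" where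
  "sysC n P4 = four_block_mat (P4 \<cdot>\<^sub>m 1\<^sub>m n) (0\<^sub>m n n) (0\<^sub>m 0 n) (0\<^sub>m 0 n)"

definition weightW :: "nat \<Rightarrow> real \<Rightarrow> real mat" where
  "weightW n P1 = 1\<^sub>m n - P1 \<cdot>\<^sub>m D2 n"

definition sym_pos_def_mat :: "nat \<Rightarrow> real mat \<Rightarrow> bool" where
  "sym_pos_def_mat N S \<longleftrightarrow> S \<in> carrier_mat N N \<and> transpose_mat S = S \<and>
     (\<forall>x \<in> carrier_vec N. x \<noteq> 0\<^sub>v N \<longrightarrow> x \<bullet> (S *\<^sub>v x) > 0)"

definition hurwitz :: "real mat \<Rightarrow> bool" where
  "hurwitz M \<longleftrightarrow> (\<forall>k. eigenvalue (map_mat complex_of_real M) k \<longrightarrow> Re k < 0)"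

definition stabilizing_riccati_sol ::
  "real mat \<Rightarrow> real mat \<Rightarrow> real mat \<Rightarrow> real mat \<Rightarrow> real mat \<Rightarrow> bool" where
  "stabilizing_riccati_sol A B C W S \<longleftrightarrow>
     sym_pos_def_mat (dim_row A) S \<and>
     A * S + S * transpose_mat A + B * transpose_mat B
       - S * transpose_mat C * W * C * S = 0\<^sub>m (dim_row A) (dim_row A) \<and>
     hurwitz (A - S * transpose_mat C * W * C)"

definition kalman_gain ::
  "real mat \<Rightarrow> real mat \<Rightarrow> real mat \<Rightarrow> real mat \<Rightarrow> real mat \<Rightarrow> bool" where
  "kalman_gain A B C W L \<longleftrightarrow>
     (\<exists>S. stabilizing_riccati_sol A B C W S \<and> L = S * transpose_mat C * W)"

definition dft_mat :: "nat \<Rightarrow> complex mat" where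
  "dft_mat n = mat n n (\<lambda>(k,j). exp (- 2 * pi * \<i> * of_nat (k * j) / of_nat n) / of_real (sqrt (real n)))"

definition Dhat :: "nat \<Rightarrow> nat \<Rightarrow> real" where
  "Dhat n \<kappa> = - 4 * (sin (pi * real \<kappa> / real n))^2"

definition L0hat :: "nat \<Rightarrow> real \<Rightarrow> real \<Rightarrow> nat \<Rightarrow> real" where
  "L0hat n P1 P4 \<kappa> = Dhat n \<kappa> / P4
      + sqrt ((Dhat n \<kappa>)^2 / P4^2 - P1 * Dhat n \<kappa> + 1)"

definition circ_of_symbol :: "nat \<Rightarrow> (nat \<Rightarrow> real) \<Rightarrow> complex mat" where
  "circ_of_symbol n f = the (mat_inverse (dft_mat n)) * mat_diag n (\<lambda>k. complex_of_real (f k)) * dft_mat n"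

end

theory Submission
  imports Defs "Jordan_Normal_Form.Schur_Decomposition"
begin

text \<open>
  All system matrices are (block) circulant, so the unitary DFT diagonalises them simultaneously:
  \<open>D2\<close> has the eigenvalues \<open>d = Dhat n \<kappa> \<le> 0\<close> and \<open>W\<close> the eigenvalues \<open>w = 1 - P1 d > 0\<close>.
  The \<open>2n \<times> 2n\<close> filter Riccati equation therefore splits into \<open>n\<close> scalar \<open>2 \<times> 2\<close> Riccati
  equations, one per mode \<open>\<kappa>\<close>.  With \<open>l = L0hat n P1 P4 \<kappa>\<close>, the positive root of
  \<open>P4 l\<^sup>2 - 2 d l = w P4\<close>, and \<open>l1 = sqrt (2 l / P4)\<close>, the mode solution is
  \<open>S = 1 / (P4 w) [[l1, l], [l, l1 (P4 l - d)]]\<close>.  It is positive definite, its gain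
  \<open>S C\<^sup>T W\<close> is \<open>(l1, l)\<close>, and its closed-loop matrix has characteristic polynomial
  \<open>z\<^sup>2 + P4 l1 z + (P4 l - d)\<close> with positive coefficients, so it is Hurwitz.

  The stabilizing solution is unique: the difference \<open>X\<close> of two of them solves the Sylvester
  equation \<open>(A - S1 G) X + X (A - S2 G)\<^sup>T = 0\<close> with \<open>G = C\<^sup>T W C\<close>, and as both coefficients are
  Hurwitz no eigenvalue of the first is the negative of one of the second, which forces \<open>X = 0\<close>
  (after Schur triangularisation of both coefficients, entry by entry).
\<close>

lemma square_mult_carrier_mat [simp]:
  "A \<in> carrier_mat n n \<Longrightarrow> B \<in> carrier_mat n n \<Longrightarrow> A * B \<in> carrier_mat n n"
  by (rule mult_carrier_mat)

lemma mat_diag_dims [simp]: "dim_row (mat_diag n f) = n" "dim_col (mat_diag n f) = n"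
  using mat_diag_dim[of n f] by (simp_all del: mat_diag_dim)

lemma index_mat_diag_mult_vec:
  assumes "v \<in> carrier_vec n" "k < n"
  shows "(mat_diag n f *\<^sub>v v) $ k = f k * v $ k"
proof -
  have "(mat_diag n f *\<^sub>v v) $ k = (\<Sum>i<n. (if k = i then f i else 0) * v $ i)"
    using assms by (simp add: mat_diag_def scalar_prod_def lessThan_atLeast0)
  also have "\<dots> = f k * v $ k"
    using assms(2) by (simp add: if_distrib[of "\<lambda>x. x * _"] cong: if_cong)
  finally show ?thesis .
qed

lemma mult_mat_vec_carrier_dim [simp]: "dim_row A = n \<Longrightarrow> A *\<^sub>v v \<in> carrier_vec n"
  by (rule carrier_vecI) simp

lemma mat_adjoint_dim [simp]:
  "dim_row (mat_adjoint A) = dim_col A" "dim_col (mat_adjoint A) = dim_row A"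
  unfolding mat_adjoint_def by simp_all

lemma index_mat_adjoint:
  "i < dim_col A \<Longrightarrow> j < dim_row A \<Longrightarrow> mat_adjoint A $$ (i, j) = conjugate (A $$ (j, i))"
  unfolding mat_adjoint_def by (simp add: mat_of_rows_def)

lemma carrier_vec_append_cases:
  assumes "x \<in> carrier_vec (n + m)"
  obtains x1 x2 where "x1 \<in> carrier_vec n" "x2 \<in> carrier_vec m" "x = x1 @\<^sub>v x2"
  using vec_first_last_append[OF assms] vec_first_carrier vec_last_carrier by metis

abbreviation of_real_mat :: "real mat \<Rightarrow> complex mat" where
  "of_real_mat \<equiv> map_mat complex_of_real"

abbreviation of_real_vec :: "real vec \<Rightarrow> complex vec" where
  "of_real_vec \<equiv> map_vec complex_of_real"

lemma of_real_mat_zero [simp]: "of_real_mat (0\<^sub>m nr nc) = 0\<^sub>m nr nc"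
  by (rule eq_matI) auto

lemma of_real_mat_add:
  "A \<in> carrier_mat nr nc \<Longrightarrow> B \<in> carrier_mat nr nc \<Longrightarrow> of_real_mat (A + B) = of_real_mat A + of_real_mat B"
  by (rule eq_matI) auto

lemma of_real_scalar_prod:
  "dim_vec w = dim_vec u \<Longrightarrow> complex_of_real (u \<bullet> w) = of_real_vec u \<bullet> of_real_vec w"
  by (simp add: scalar_prod_def of_real_sum)

section \<open>Roots of unity and the unitary DFT\<close>

lemma sum_roots_of_unity:
  "(\<Sum>k<n. cis (2 * pi * real_of_int m * real k / real n)) = (if int n dvd m then of_nat n else 0)"
proof (cases "n = 0")
  case False
  define z where "z = cis (2 * pi * real_of_int m / real n)"
  have powers: "cis (2 * pi * real_of_int m * real k / real n) = z ^ k" for k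
    unfolding z_def DeMoivre by (simp add: field_simps)
  show ?thesis
  proof (cases "int n dvd m")
    case True
    then obtain q where "m = int n * q" by (elim dvdE)
    then have "z = cis (2 * pi * real_of_int q)"
      unfolding z_def using False by (simp add: field_simps)
    then have "z = 1" by (metis cis_multiple_2pi Ints_of_int)
    with True show ?thesis unfolding powers by simp
  next
    case not_dvd: False
    have "z ^ n = 1"
      unfolding z_def DeMoivre using False by (simp add: cis_multiple_2pi)
    moreover have "z \<noteq> 1"
    proof
      assume "z = 1"
      then have "cos (2 * pi * real_of_int m / real n) = 1"
        unfolding z_def by (metis cis.sel(1) one_complex.sel(1))
      then obtain t :: int where "2 * pi * real_of_int m / real n = real_of_int t * 2 * pi"
        unfolding cos_one_2pi_int by blast
      then have "real_of_int m = real_of_int (t * int n)"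
        using False by (simp add: field_simps)
      with not_dvd show False by (simp only: of_int_eq_iff) simp
    qed
    ultimately show ?thesis using not_dvd unfolding powers sum_gp_strict by simp
  qed
qed simp

lemma eq_mod_iff_int_dvd: "j < n \<Longrightarrow> j = x mod n \<longleftrightarrow> int n dvd int x - int j"
  by (metis mod_eq_dvd_iff mod_less of_nat_eq_iff zmod_int)

lemma sum_roots_of_unity_orthogonal:
  assumes "i < n" "j < n"
  shows "(\<Sum>k<n. cis (2 * pi * real k * (real i - real j) / real n)) = (if i = j then of_nat n else 0)"
proof -
  have "int n dvd int i - int j \<longleftrightarrow> i = j"
    using eq_mod_iff_int_dvd[OF assms(2), of i] assms by auto
  moreover have "real i - real j = real_of_int (int i - int j)" by simp
  ultimately show ?thesis
    using sum_roots_of_unity[of "int i - int j" n] by (simp add: mult_ac)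
qed

lemma index_dft_mat:
  assumes "i < n" "j < n"
  shows "dft_mat n $$ (i, j) = cis (- 2 * pi * real (i * j) / real n) / complex_of_real (sqrt (real n))"
proof -
  have "dft_mat n $$ (i, j) = exp (- 2 * pi * \<i> * of_nat (i * j) / of_nat n) / complex_of_real (sqrt (real n))"
    using assms unfolding dft_mat_def by simp
  also have "- 2 * pi * \<i> * of_nat (i * j) / of_nat n = \<i> * complex_of_real (- 2 * pi * real (i * j) / real n)"
    by (simp add: field_simps)
  finally show ?thesis unfolding cis_conv_exp .
qed

lemma dft_mat_carrier [simp]: "dft_mat n \<in> carrier_mat n n"
  and dft_mat_dim [simp]: "dim_row (dft_mat n) = n" "dim_col (dft_mat n) = n"
  unfolding dft_mat_def by simp_all

lemma dft_adjoint_carrier [simp]: "mat_adjoint (dft_mat n) \<in> carrier_mat n n"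
  by (rule carrier_matI) simp_all

lemma index_dft_adjoint:
  assumes "i < n" "j < n"
  shows "mat_adjoint (dft_mat n) $$ (i, j) = cis (2 * pi * real (i * j) / real n) / complex_of_real (sqrt (real n))"
  using assms by (simp add: index_mat_adjoint index_dft_mat cis_cnj mult.commute)

lemma dft_adjoint_mult_entry:
  assumes "a < n" "k < n" "b < n"
  shows "mat_adjoint (dft_mat n) $$ (a, k) * dft_mat n $$ (k, b)
      = cis (2 * pi * real k * (real a - real b) / real n) / of_nat n"
    and "dft_mat n $$ (b, k) * mat_adjoint (dft_mat n) $$ (k, a)
      = cis (2 * pi * real k * (real a - real b) / real n) / of_nat n"
proof -
  have "complex_of_real (sqrt (real n)) * complex_of_real (sqrt (real n)) = of_nat n"
    by (simp only: of_real_mult[symmetric]) (simp del: of_real_mult)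
  moreover have "cis (2 * pi * real (a * k) / real n) * cis (- 2 * pi * real (k * b) / real n)
      = cis (2 * pi * real k * (real a - real b) / real n)"
    unfolding cis_mult using assms by (simp add: field_simps)
  ultimately show "mat_adjoint (dft_mat n) $$ (a, k) * dft_mat n $$ (k, b)
      = cis (2 * pi * real k * (real a - real b) / real n) / of_nat n"
    and "dft_mat n $$ (b, k) * mat_adjoint (dft_mat n) $$ (k, a)
      = cis (2 * pi * real k * (real a - real b) / real n) / of_nat n"
    using assms by (simp_all add: index_dft_adjoint index_dft_mat mult_ac)
qed

lemma dft_mat_unitary:
  "dft_mat n * mat_adjoint (dft_mat n) = 1\<^sub>m n"
  "mat_adjoint (dft_mat n) * dft_mat n = 1\<^sub>m n"
proof -
  let ?F = "dft_mat n" and ?G = "mat_adjoint (dft_mat n)"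
  have "(?G * ?F) $$ (i, j) = 1\<^sub>m n $$ (i, j)" and "(?F * ?G) $$ (j, i) = 1\<^sub>m n $$ (j, i)"
    if ij: "i < n" "j < n" for i j
  proof -
    have "(?G * ?F) $$ (i, j) = (\<Sum>k<n. ?G $$ (i, k) * ?F $$ (k, j))"
      and "(?F * ?G) $$ (j, i) = (\<Sum>k<n. ?F $$ (j, k) * ?G $$ (k, i))"
      using ij by (simp_all add: scalar_prod_def lessThan_atLeast0)
    with ij have "(?G * ?F) $$ (i, j) = (\<Sum>k<n. cis (2 * pi * real k * (real i - real j) / real n)) / of_nat n"
      and "(?F * ?G) $$ (j, i) = (\<Sum>k<n. cis (2 * pi * real k * (real i - real j) / real n)) / of_nat n"
      by (simp_all add: dft_adjoint_mult_entry sum_divide_distrib)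
    then show "(?G * ?F) $$ (i, j) = 1\<^sub>m n $$ (i, j)" "(?F * ?G) $$ (j, i) = 1\<^sub>m n $$ (j, i)"
      using ij sum_roots_of_unity_orthogonal[OF ij] by auto
  qed
  then show "?F * ?G = 1\<^sub>m n" "?G * ?F = 1\<^sub>m n"
    by (auto intro!: eq_matI)
qed

lemma mat_inverse_dft_mat: "the (mat_inverse (dft_mat n)) = mat_adjoint (dft_mat n)"
proof (cases "mat_inverse (dft_mat n)")
  case None
  have "dft_mat n \<in> Units (ring_mat TYPE(complex) n ())"
    unfolding Units_def ring_mat_def
    by (auto simp: dft_mat_unitary intro!: bexI[of _ "mat_adjoint (dft_mat n)"])
  with mat_inverse(1)[OF dft_mat_carrier None] show ?thesis by contradiction
next
  case (Some B)
  with mat_inverse(2)[OF dft_mat_carrier Some]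
  have B: "dft_mat n * B = 1\<^sub>m n" "B \<in> carrier_mat n n" by auto
  have "B = (mat_adjoint (dft_mat n) * dft_mat n) * B" using B by (simp add: dft_mat_unitary)
  also have "\<dots> = mat_adjoint (dft_mat n)"
    using B by (subst assoc_mult_mat[of _ n n _ n _ n]) auto
  finally show ?thesis using Some by simp
qed

lemma dft_mat_vec_nonzero:
  assumes "v \<in> carrier_vec n" "v \<noteq> 0\<^sub>v n"
  shows "\<exists>k<n. (dft_mat n *\<^sub>v v) $ k \<noteq> 0"
proof (rule ccontr)
  assume "\<not> ?thesis"
  then have zero: "dft_mat n *\<^sub>v v = 0\<^sub>v n" by (intro eq_vecI) auto
  have "v = (mat_adjoint (dft_mat n) * dft_mat n) *\<^sub>v v"
    using assms(1) by (simp add: dft_mat_unitary)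
  also have "\<dots> = mat_adjoint (dft_mat n) *\<^sub>v (dft_mat n *\<^sub>v v)"
    using assms(1) by (simp add: assoc_mult_mat_vec[of _ n n _ n])
  also have "\<dots> = 0\<^sub>v n"
    unfolding zero by (intro eq_vecI) simp_all
  finally show False using assms(2) by contradiction
qed

section \<open>Circulant matrices\<close>

abbreviation symbol_diag :: "nat \<Rightarrow> (nat \<Rightarrow> real) \<Rightarrow> complex mat" where
  "symbol_diag n f \<equiv> mat_diag n (\<lambda>k. complex_of_real (f k))"

lemma circ_of_symbol_altdef:
  "circ_of_symbol n f = mat_adjoint (dft_mat n) * symbol_diag n f * dft_mat n"
  unfolding circ_of_symbol_def mat_inverse_dft_mat ..

lemma circ_of_symbol_carrier [simp]: "circ_of_symbol n f \<in> carrier_mat n n"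
  and circ_of_symbol_dims [simp]: "dim_row (circ_of_symbol n f) = n" "dim_col (circ_of_symbol n f) = n"
  unfolding circ_of_symbol_altdef by simp_all

lemma dft_mat_mult_circ_of_symbol:
  "dft_mat n * circ_of_symbol n f = symbol_diag n f * dft_mat n"
proof -
  have "dft_mat n * circ_of_symbol n f
      = (dft_mat n * mat_adjoint (dft_mat n)) * (symbol_diag n f * dft_mat n)"
    unfolding circ_of_symbol_altdef
    by (simp add: assoc_mult_mat[of _ n n _ n _ n])
  then show ?thesis by (simp add: dft_mat_unitary)
qed

lemma circ_of_symbol_mult:
  "circ_of_symbol n f * circ_of_symbol n g = circ_of_symbol n (\<lambda>k. f k * g k)"
proof -
  have "circ_of_symbol n f * circ_of_symbol n g
      = mat_adjoint (dft_mat n) * (symbol_diag n f * (dft_mat n * circ_of_symbol n g))"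
    unfolding circ_of_symbol_altdef[of n f] by (simp add: assoc_mult_mat[of _ n n _ n _ n])
  also have "symbol_diag n f * (dft_mat n * circ_of_symbol n g) = symbol_diag n (\<lambda>k. f k * g k) * dft_mat n"
    unfolding dft_mat_mult_circ_of_symbol by (simp add: assoc_mult_mat[symmetric, of _ n n _ n _ n])
  finally show ?thesis
    unfolding circ_of_symbol_altdef by (simp add: assoc_mult_mat[of _ n n _ n _ n])
qed

lemma circ_of_symbol_one: "circ_of_symbol n (\<lambda>k. 1) = 1\<^sub>m n"
  unfolding circ_of_symbol_altdef by (simp add: dft_mat_unitary)

lemma index_circ_of_symbol:
  assumes "i < n" "j < n"
  shows "circ_of_symbol n f $$ (i, j)
    = (\<Sum>k<n. complex_of_real (f k) * cis (2 * pi * real k * (real i - real j) / real n)) / of_nat n"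
proof -
  have "circ_of_symbol n f = mat_adjoint (dft_mat n) * (symbol_diag n f * dft_mat n)"
    unfolding circ_of_symbol_altdef by (simp add: assoc_mult_mat[of _ n n _ n _ n])
  then have "circ_of_symbol n f $$ (i, j)
      = (\<Sum>k<n. complex_of_real (f k) * (mat_adjoint (dft_mat n) $$ (i, k) * dft_mat n $$ (k, j)))"
    using assms by (simp add: mat_diag_mult_left[of _ n n] scalar_prod_def lessThan_atLeast0 mult_ac)
  then show ?thesis
    using assms by (simp add: dft_adjoint_mult_entry sum_divide_distrib)
qed

lemma index_dft_mult_circ_of_symbol_vec:
  assumes "v \<in> carrier_vec n" "k < n"
  shows "(dft_mat n *\<^sub>v (circ_of_symbol n f *\<^sub>v v)) $ k = complex_of_real (f k) * (dft_mat n *\<^sub>v v) $ k"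
proof -
  have "dft_mat n *\<^sub>v (circ_of_symbol n f *\<^sub>v v) = symbol_diag n f *\<^sub>v (dft_mat n *\<^sub>v v)"
    using assms(1) by (simp add: assoc_mult_mat_vec[symmetric, of _ n n _ n] dft_mat_mult_circ_of_symbol)
  then show ?thesis
    using assms index_mat_diag_mult_vec[of "dft_mat n *\<^sub>v v" n k] by simp
qed

lemma dft_mode_equation:
  assumes "v \<in> carrier_vec n" "w \<in> carrier_vec n" "k < n"
    and "circ_of_symbol n f *\<^sub>v v + circ_of_symbol n g *\<^sub>v w = z \<cdot>\<^sub>v v"
  shows "complex_of_real (f k) * (dft_mat n *\<^sub>v v) $ k + complex_of_real (g k) * (dft_mat n *\<^sub>v w) $ k
    = z * (dft_mat n *\<^sub>v v) $ k"
proof -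
  let ?F = "dft_mat n"
  have "?F *\<^sub>v (circ_of_symbol n f *\<^sub>v v + circ_of_symbol n g *\<^sub>v w)
      = ?F *\<^sub>v (circ_of_symbol n f *\<^sub>v v) + ?F *\<^sub>v (circ_of_symbol n g *\<^sub>v w)"
    by (rule mult_add_distrib_mat_vec) (use assms in auto)
  moreover have "?F *\<^sub>v (z \<cdot>\<^sub>v v) = z \<cdot>\<^sub>v (?F *\<^sub>v v)"
    by (rule mult_mat_vec) (use assms in auto)
  ultimately have "(?F *\<^sub>v (circ_of_symbol n f *\<^sub>v v) + ?F *\<^sub>v (circ_of_symbol n g *\<^sub>v w)) $ k
      = (z \<cdot>\<^sub>v (?F *\<^sub>v v)) $ k"
    using assms(4) by simp
  then show ?thesis
    using assms(1-3) by (simp add: index_dft_mult_circ_of_symbol_vec del: index_mult_mat_vec)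
qed

definition even_symbol :: "nat \<Rightarrow> (nat \<Rightarrow> real) \<Rightarrow> bool" where
  "even_symbol n f \<longleftrightarrow> (\<forall>k<n. f ((n - k) mod n) = f k)"

lemma even_symbol_const [simp]: "even_symbol n (\<lambda>k. c)"
  and even_symbol_uminus [simp]: "even_symbol n f \<Longrightarrow> even_symbol n (\<lambda>k. - f k)"
  and even_symbol_diff [simp]: "even_symbol n f \<Longrightarrow> even_symbol n g \<Longrightarrow> even_symbol n (\<lambda>k. f k - g k)"
  and even_symbol_mult [simp]: "even_symbol n f \<Longrightarrow> even_symbol n g \<Longrightarrow> even_symbol n (\<lambda>k. f k * g k)"
  unfolding even_symbol_def by simp_all

lemma sum_sin_even_symbol:
  assumes "even_symbol n f"
  shows "(\<Sum>k<n. f k * sin (2 * pi * real k * real_of_int t / real n)) = 0"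
proof -
  define r where "r k = (n - k) mod n" for k
  have r_inv: "r (r k) = k" and r_less: "r k < n" if "k < n" for k
    using that unfolding r_def by (auto simp: mod_if)
  have sin_r: "sin (2 * pi * real (r k) * t / real n) = - sin (2 * pi * real k * t / real n)"
    if k: "k < n" for k
  proof (cases "k = 0")
    case False
    with k have "2 * pi * real (r k) * t / real n = 2 * pi * real_of_int t - 2 * pi * real k * t / real n"
      unfolding r_def by (simp add: of_nat_diff field_simps)
    then show ?thesis by (simp add: sin_diff mult.assoc[symmetric])
  qed (simp add: r_def)
  have "(\<Sum>k<n. f k * sin (2 * pi * real k * t / real n))
      = (\<Sum>k<n. f (r k) * sin (2 * pi * real (r k) * t / real n))"
    by (rule sum.reindex_bij_witness[where i = r and j = r]) (auto simp: r_inv r_less)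
  also have "\<dots> = - (\<Sum>k<n. f k * sin (2 * pi * real k * t / real n))"
  proof -
    have "f (r k) = f k" if "k < n" for k
      using assms that unfolding even_symbol_def r_def by simp
    then show ?thesis by (simp add: sum_negf[symmetric] sin_r)
  qed
  finally show ?thesis by simp
qed

definition real_circulant :: "nat \<Rightarrow> (nat \<Rightarrow> real) \<Rightarrow> real mat" where
  "real_circulant n f =
     mat n n (\<lambda>(i, j). (\<Sum>k<n. f k * cos (2 * pi * real k * (real i - real j) / real n)) / real n)"

lemma real_circulant_carrier [simp]: "real_circulant n f \<in> carrier_mat n n"
  and real_circulant_dims [simp]: "dim_row (real_circulant n f) = n" "dim_col (real_circulant n f) = n"
  unfolding real_circulant_def by simp_all

lemma transpose_real_circulant [simp]: "transpose_mat (real_circulant n f) = real_circulant n f"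
proof (rule eq_matI)
  have "cos (2 * pi * real k * (real j - real i) / real n) = cos (2 * pi * real k * (real i - real j) / real n)"
    for i j k
    by (metis cos_minus minus_diff_eq minus_divide_left mult_minus_right)
  then show "transpose_mat (real_circulant n f) $$ (i, j) = real_circulant n f $$ (i, j)"
    if "i < dim_row (real_circulant n f)" "j < dim_col (real_circulant n f)" for i j
    using that unfolding real_circulant_def by simp
qed auto

text \<open>For an even symbol the imaginary parts of the entries of the circulant cancel in pairs.\<close>

lemma of_real_real_circulant:
  assumes "even_symbol n f"
  shows "of_real_mat (real_circulant n f) = circ_of_symbol n f"
proof (rule eq_matI)
  fix i j assume "i < dim_row (circ_of_symbol n f)" "j < dim_col (circ_of_symbol n f)"
  then have ij: "i < n" "j < n" by auto
  let ?\<theta> = "\<lambda>k. 2 * pi * real k * (real i - real j) / real n"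
  have "complex_of_real (f k) * cis (?\<theta> k)
      = complex_of_real (f k * cos (?\<theta> k)) + \<i> * complex_of_real (f k * sin (?\<theta> k))" for k
    by (simp add: complex_eq_iff)
  then have "(\<Sum>k<n. complex_of_real (f k) * cis (?\<theta> k))
      = complex_of_real (\<Sum>k<n. f k * cos (?\<theta> k)) + \<i> * complex_of_real (\<Sum>k<n. f k * sin (?\<theta> k))"
    by (simp add: sum.distrib sum_distrib_left)
  moreover have "(\<Sum>k<n. f k * sin (?\<theta> k)) = 0"
    using sum_sin_even_symbol[OF assms, of "int i - int j"] by (simp add: mult.assoc)
  ultimately show "of_real_mat (real_circulant n f) $$ (i, j) = circ_of_symbol n f $$ (i, j)"
    using ij by (simp add: index_circ_of_symbol real_circulant_def)
qed auto

lemma real_circulant_mult: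
  assumes "even_symbol n f" "even_symbol n g"
  shows "real_circulant n f * real_circulant n g = real_circulant n (\<lambda>k. f k * g k)"
proof (rule of_real_hom.mat_hom_inj)
  have "of_real_mat (real_circulant n f * real_circulant n g)
      = of_real_mat (real_circulant n f) * of_real_mat (real_circulant n g)"
    by (rule of_real_hom.mat_hom_mult) auto
  then show "of_real_mat (real_circulant n f * real_circulant n g)
      = of_real_mat (real_circulant n (\<lambda>k. f k * g k))"
    using assms by (simp add: of_real_real_circulant circ_of_symbol_mult)
qed

lemma real_circulant_add: "real_circulant n f + real_circulant n g = real_circulant n (\<lambda>k. f k + g k)"
  unfolding real_circulant_def by (rule eq_matI) (auto simp: sum.distrib add_divide_distrib algebra_simps)

lemma real_circulant_diff: "real_circulant n f - real_circulant n g = real_circulant n (\<lambda>k. f k - g k)"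
  unfolding real_circulant_def by (rule eq_matI) (auto simp: sum_subtractf diff_divide_distrib algebra_simps)

lemma real_circulant_smult: "c \<cdot>\<^sub>m real_circulant n f = real_circulant n (\<lambda>k. c * f k)"
  unfolding real_circulant_def by (rule eq_matI) (auto simp: sum_distrib_left algebra_simps)

lemma real_circulant_zero: "real_circulant n (\<lambda>k. 0) = 0\<^sub>m n n"
  unfolding real_circulant_def by (rule eq_matI) auto

lemma real_circulant_one: "real_circulant n (\<lambda>k. 1) = 1\<^sub>m n"
proof (rule of_real_hom.mat_hom_inj)
  have "of_real_mat (real_circulant n (\<lambda>k. 1)) = circ_of_symbol n (\<lambda>k. 1)"
    by (rule of_real_real_circulant) simp
  then show "of_real_mat (real_circulant n (\<lambda>k. 1)) = of_real_mat (1\<^sub>m n)"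
    by (simp add: circ_of_symbol_one of_real_hom.mat_hom_one)
qed

lemma real_circulant_cong: "(\<And>k. k < n \<Longrightarrow> f k = g k) \<Longrightarrow> real_circulant n f = real_circulant n g"
  unfolding real_circulant_def by (rule eq_matI) (auto intro!: sum.cong)

lemma transpose_dft_adjoint_mult_of_real_vec:
  assumes "u \<in> carrier_vec n"
  shows "transpose_mat (mat_adjoint (dft_mat n)) *\<^sub>v of_real_vec u
    = vec n (\<lambda>k. cnj ((dft_mat n *\<^sub>v of_real_vec u) $ k))"
proof (rule eq_vecI)
  fix k assume "k < dim_vec (vec n (\<lambda>k. cnj ((dft_mat n *\<^sub>v of_real_vec u) $ k)))"
  then have k: "k < n" by simp
  have "(transpose_mat (mat_adjoint (dft_mat n)) *\<^sub>v of_real_vec u) $ k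
      = (\<Sum>i<n. cnj (dft_mat n $$ (k, i) * complex_of_real (u $ i)))"
    using k assms by (simp add: scalar_prod_def lessThan_atLeast0 index_mat_adjoint mult.commute)
  also have "\<dots> = cnj ((dft_mat n *\<^sub>v of_real_vec u) $ k)"
    using k assms by (simp add: scalar_prod_def lessThan_atLeast0)
  finally show "(transpose_mat (mat_adjoint (dft_mat n)) *\<^sub>v of_real_vec u) $ k
      = vec n (\<lambda>k. cnj ((dft_mat n *\<^sub>v of_real_vec u) $ k)) $ k"
    using k by simp
qed (use assms in auto)

lemma quadratic_form_real_circulant:
  assumes "even_symbol n f" "u \<in> carrier_vec n" "v \<in> carrier_vec n"
  shows "complex_of_real (u \<bullet> (real_circulant n f *\<^sub>v v))
    = (\<Sum>k<n. cnj ((dft_mat n *\<^sub>v of_real_vec u) $ k) * complex_of_real (f k)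
              * (dft_mat n *\<^sub>v of_real_vec v) $ k)"
proof -
  let ?F = "dft_mat n" and ?G = "mat_adjoint (dft_mat n)"
  let ?u = "of_real_vec u" and ?v = "of_real_vec v"
  have "of_real_vec (real_circulant n f *\<^sub>v v) = of_real_mat (real_circulant n f) *\<^sub>v ?v"
    by (rule of_real_hom.mult_mat_vec_hom) (use assms in auto)
  also have "\<dots> = circ_of_symbol n f *\<^sub>v ?v"
    unfolding of_real_real_circulant[OF assms(1)] ..
  also have "\<dots> = ?G *\<^sub>v (symbol_diag n f *\<^sub>v (?F *\<^sub>v ?v))"
    unfolding circ_of_symbol_altdef using assms(3) by (simp add: assoc_mult_mat_vec[of _ n n _ n])
  finally have "complex_of_real (u \<bullet> (real_circulant n f *\<^sub>v v))
      = ?u \<bullet> (?G *\<^sub>v (symbol_diag n f *\<^sub>v (?F *\<^sub>v ?v)))"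
    using assms(2) by (simp add: of_real_scalar_prod)
  also have "\<dots> = (transpose_mat ?G *\<^sub>v ?u) \<bullet> (symbol_diag n f *\<^sub>v (?F *\<^sub>v ?v))"
    by (rule transpose_vec_mult_scalar[symmetric]) (use assms in auto)
  also have "\<dots> = (\<Sum>k<n. cnj ((?F *\<^sub>v ?u) $ k) * (complex_of_real (f k) * (?F *\<^sub>v ?v) $ k))"
    unfolding transpose_dft_adjoint_mult_of_real_vec[OF assms(2)]
    by (simp add: scalar_prod_def lessThan_atLeast0 index_mat_diag_mult_vec del: index_mult_mat_vec)
  finally show ?thesis by (simp add: mult.assoc)
qed

section \<open>The periodic second-difference matrix\<close>

lemma Dhat_nonpos: "Dhat n k \<le> 0"
  unfolding Dhat_def by simp

lemma Dhat_reflect: "k < n \<Longrightarrow> Dhat n ((n - k) mod n) = Dhat n k"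
proof (cases "k = 0")
  case False
  assume "k < n"
  with False have "pi * real ((n - k) mod n) / real n = pi - pi * real k / real n"
    by (simp add: of_nat_diff field_simps)
  then show ?thesis unfolding Dhat_def by simp
qed simp

lemma even_symbol_comp_Dhat [simp]: "even_symbol n (\<lambda>k. h (Dhat n k))"
  unfolding even_symbol_def by (simp add: Dhat_reflect)

lemma even_symbol_Dhat [simp]: "even_symbol n (Dhat n)"
  using even_symbol_comp_Dhat[of n "\<lambda>x. x"] by simp

lemma Dhat_eq_cos: "Dhat n k = 2 * cos (2 * pi * real k / real n) - 2"
  using cos_double_sin[of "pi * real k / real n"] unfolding Dhat_def by (simp add: mult.assoc)

lemma sum_cos_roots_of_unity:
  "(\<Sum>k<n. cos (2 * pi * real k * real_of_int m / real n)) = (if int n dvd m then real n else 0)"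
  using arg_cong[OF sum_roots_of_unity[of m n], of Re] by (simp add: Re_sum mult_ac)

lemma index_D2:
  assumes "i < n" "j < n"
  shows "D2 n $$ (i, j) = (if int n dvd int i - int j + 1 then 1 else 0)
    + (if int n dvd int i - int j - 1 then 1 else 0) - (if int n dvd int i - int j then 2 else 0)"
proof -
  have "j = (i + 1) mod n \<longleftrightarrow> int n dvd int i - int j + 1"
    using eq_mod_iff_int_dvd[OF assms(2), of "i + 1"] by (simp add: algebra_simps)
  moreover have "j = (i + n - 1) mod n \<longleftrightarrow> int n dvd int i - int j - 1"
  proof -
    have "int (i + n - 1) - int j = (int i - int j - 1) + int n"
      using assms by (simp add: of_nat_diff)
    then have "int n dvd int (i + n - 1) - int j \<longleftrightarrow> int n dvd int i - int j - 1"
      by (simp only: dvd_add_left_iff[OF dvd_refl])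
    with eq_mod_iff_int_dvd[OF assms(2), of "i + n - 1"] show ?thesis by simp
  qed
  moreover have "i = j \<longleftrightarrow> int n dvd int i - int j"
    using eq_mod_iff_int_dvd[OF assms(2), of i] assms by auto
  ultimately show ?thesis
    using assms by (simp add: D2_def)
qed

lemma Dhat_mult_cos:
  "Dhat n k * cos (2 * pi * real k * x / real n)
    = cos (2 * pi * real k * (x + 1) / real n) + cos (2 * pi * real k * (x - 1) / real n)
      - 2 * cos (2 * pi * real k * x / real n)"
proof -
  define \<alpha> where "\<alpha> = 2 * pi * real k / real n"
  define \<theta> where "\<theta> = 2 * pi * real k * x / real n"
  have "Dhat n k * cos \<theta> = cos (\<theta> + \<alpha>) + cos (\<theta> - \<alpha>) - 2 * cos \<theta>"
    unfolding Dhat_eq_cos \<alpha>_def[symmetric] cos_add cos_diff by (simp add: algebra_simps)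
  moreover have "\<theta> + \<alpha> = 2 * pi * real k * (x + 1) / real n" "\<theta> - \<alpha> = 2 * pi * real k * (x - 1) / real n"
    unfolding \<alpha>_def \<theta>_def by (simp_all add: algebra_simps add_divide_distrib diff_divide_distrib)
  ultimately show ?thesis unfolding \<theta>_def by simp
qed

lemma D2_eq_real_circulant: "D2 n = real_circulant n (Dhat n)"
proof (rule eq_matI)
  fix i j assume "i < dim_row (real_circulant n (Dhat n))" "j < dim_col (real_circulant n (Dhat n))"
  then have ij: "i < n" "j < n" by auto
  define t where "t = int i - int j"
  let ?S = "\<lambda>m. \<Sum>k<n. cos (2 * pi * real k * real_of_int m / real n)"
  have "real_circulant n (Dhat n) $$ (i, j)
      = (\<Sum>k<n. Dhat n k * cos (2 * pi * real k * real_of_int t / real n)) / real n"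
    using ij by (simp add: real_circulant_def t_def)
  also have "\<dots> = (?S (t + 1) + ?S (t - 1) - 2 * ?S t) / real n"
    unfolding Dhat_mult_cos by (simp add: sum.distrib sum_subtractf sum_distrib_left)
  also have "\<dots> = D2 n $$ (i, j)"
    unfolding sum_cos_roots_of_unity index_D2[OF ij] t_def using ij by simp
  finally show "D2 n $$ (i, j) = real_circulant n (Dhat n) $$ (i, j)" ..
qed (simp_all add: D2_def)

section \<open>Block circulant matrices\<close>

definition block_circulant ::
  "nat \<Rightarrow> (nat \<Rightarrow> real) \<Rightarrow> (nat \<Rightarrow> real) \<Rightarrow> (nat \<Rightarrow> real) \<Rightarrow> (nat \<Rightarrow> real) \<Rightarrow> real mat" where
  "block_circulant n a b c d =
     four_block_mat (real_circulant n a) (real_circulant n b) (real_circulant n c) (real_circulant n d)"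

definition stacked_circulant :: "nat \<Rightarrow> (nat \<Rightarrow> real) \<Rightarrow> (nat \<Rightarrow> real) \<Rightarrow> real mat" where
  "stacked_circulant n a b = real_circulant n a @\<^sub>r real_circulant n b"

lemma block_circulant_carrier [simp]: "block_circulant n a b c d \<in> carrier_mat (n + n) (n + n)"
  and block_circulant_dims [simp]:
    "dim_row (block_circulant n a b c d) = n + n" "dim_col (block_circulant n a b c d) = n + n"
  unfolding block_circulant_def by simp_all

lemma stacked_circulant_carrier [simp]: "stacked_circulant n a b \<in> carrier_mat (n + n) n"
  unfolding stacked_circulant_def by auto

lemma block_circulant_mult:
  assumes "even_symbol n a" "even_symbol n b" "even_symbol n c" "even_symbol n d"
    and "even_symbol n a'" "even_symbol n b'" "even_symbol n c'" "even_symbol n d'"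
  shows "block_circulant n a b c d * block_circulant n a' b' c' d'
    = block_circulant n (\<lambda>k. a k * a' k + b k * c' k) (\<lambda>k. a k * b' k + b k * d' k)
        (\<lambda>k. c k * a' k + d k * c' k) (\<lambda>k. c k * b' k + d k * d' k)"
  unfolding block_circulant_def
  by (subst mult_four_block_mat[of _ n n _ n _ n _ _ n _ n])
    (simp_all add: real_circulant_mult real_circulant_add assms)

lemma block_circulant_add:
  "block_circulant n a b c d + block_circulant n a' b' c' d'
    = block_circulant n (\<lambda>k. a k + a' k) (\<lambda>k. b k + b' k) (\<lambda>k. c k + c' k) (\<lambda>k. d k + d' k)"
  unfolding block_circulant_def
  by (subst add_four_block_mat[of _ n n _ n _ n]) (simp_all add: real_circulant_add)

lemma block_circulant_diff:
  "block_circulant n a b c d - block_circulant n a' b' c' d'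
    = block_circulant n (\<lambda>k. a k - a' k) (\<lambda>k. b k - b' k) (\<lambda>k. c k - c' k) (\<lambda>k. d k - d' k)"
  unfolding block_circulant_def real_circulant_diff[symmetric] by (rule eq_matI) auto

lemma transpose_block_circulant:
  "transpose_mat (block_circulant n a b c d) = block_circulant n a c b d"
  unfolding block_circulant_def by (subst transpose_four_block_mat[of _ n n _ n _ n]) simp_all

lemma block_circulant_zero: "block_circulant n (\<lambda>k. 0) (\<lambda>k. 0) (\<lambda>k. 0) (\<lambda>k. 0) = 0\<^sub>m (n + n) (n + n)"
  unfolding block_circulant_def real_circulant_zero by (rule eq_matI) auto

lemma block_circulant_cong:
  "(\<And>k. k < n \<Longrightarrow> a k = a' k) \<Longrightarrow> (\<And>k. k < n \<Longrightarrow> b k = b' k) \<Longrightarrow>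
   (\<And>k. k < n \<Longrightarrow> c k = c' k) \<Longrightarrow> (\<And>k. k < n \<Longrightarrow> d k = d' k) \<Longrightarrow>
   block_circulant n a b c d = block_circulant n a' b' c' d'"
  unfolding block_circulant_def by (metis real_circulant_cong)

lemma stacked_circulant_cong:
  "(\<And>k. k < n \<Longrightarrow> a k = a' k) \<Longrightarrow> (\<And>k. k < n \<Longrightarrow> b k = b' k) \<Longrightarrow>
   stacked_circulant n a b = stacked_circulant n a' b'"
  unfolding stacked_circulant_def by (metis real_circulant_cong)

lemma block_circulant_mult_stacked:
  assumes "even_symbol n a" "even_symbol n b" "even_symbol n c" "even_symbol n d"
    and "even_symbol n x" "even_symbol n y"
  shows "block_circulant n a b c d * stacked_circulant n x y
    = stacked_circulant n (\<lambda>k. a k * x k + b k * y k) (\<lambda>k. c k * x k + d k * y k)"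
  unfolding block_circulant_def stacked_circulant_def append_rows_def
  by (subst mult_four_block_mat[of _ n n _ n _ n _ _ n _ 0])
    (simp_all add: real_circulant_mult real_circulant_add assms)

lemma stacked_circulant_mult:
  assumes "even_symbol n x" "even_symbol n y" "even_symbol n w"
  shows "stacked_circulant n x y * real_circulant n w
    = stacked_circulant n (\<lambda>k. x k * w k) (\<lambda>k. y k * w k)"
proof -
  have w: "real_circulant n w = four_block_mat (real_circulant n w) (0\<^sub>m n 0) (0\<^sub>m 0 n) (0\<^sub>m 0 0)"
    by (rule eq_matI) auto
  show ?thesis
    unfolding stacked_circulant_def append_rows_def
    by (subst w, subst mult_four_block_mat[of _ n n _ 0 _ n _ _ n _ 0])
      (simp_all add: real_circulant_mult assms)
qed

lemma stacked_circulant_mult_transpose: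
  assumes "even_symbol n x" "even_symbol n y" "even_symbol n u" "even_symbol n v"
  shows "stacked_circulant n x y * transpose_mat (stacked_circulant n u v)
    = block_circulant n (\<lambda>k. x k * u k) (\<lambda>k. x k * v k) (\<lambda>k. y k * u k) (\<lambda>k. y k * v k)"
  unfolding stacked_circulant_def append_rows_def block_circulant_def
  by (subst transpose_four_block_mat[of _ n n _ 0 _ n], simp_all,
      subst mult_four_block_mat[of _ n n _ 0 _ n _ _ n _ n], simp_all add: real_circulant_mult assms)

lemma of_real_block_circulant:
  assumes "even_symbol n a" "even_symbol n b" "even_symbol n c" "even_symbol n d"
  shows "of_real_mat (block_circulant n a b c d)
    = four_block_mat (circ_of_symbol n a) (circ_of_symbol n b) (circ_of_symbol n c) (circ_of_symbol n d)"
  unfolding block_circulant_def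
  by (subst map_four_block_mat[of _ n n _ n _ n]) (simp_all add: of_real_real_circulant assms)

lemma of_real_stacked_circulant:
  assumes "even_symbol n a" "even_symbol n b"
  shows "of_real_mat (stacked_circulant n a b) = circ_of_symbol n a @\<^sub>r circ_of_symbol n b"
  unfolding stacked_circulant_def append_rows_def
  by (subst map_four_block_mat[of _ n n _ 0 _ n]) (auto simp: of_real_real_circulant assms)

lemma block_circulant_mult_append_vec:
  assumes "x1 \<in> carrier_vec n" "x2 \<in> carrier_vec n"
  shows "block_circulant n a b c d *\<^sub>v (x1 @\<^sub>v x2)
    = (real_circulant n a *\<^sub>v x1 + real_circulant n b *\<^sub>v x2)
      @\<^sub>v (real_circulant n c *\<^sub>v x1 + real_circulant n d *\<^sub>v x2)"
  unfolding block_circulant_def by (rule four_block_mat_mult_vec) (use assms in auto)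

lemma quadratic_form_2x2_pos:
  fixes a b c x y :: real
  assumes "0 < a" "b * b < a * c"
  shows "0 \<le> a * (x * x) + 2 * b * (x * y) + c * (y * y)"
    and "x \<noteq> 0 \<or> y \<noteq> 0 \<Longrightarrow> 0 < a * (x * x) + 2 * b * (x * y) + c * (y * y)"
proof -
  have completed_square: "a * (a * (x * x) + 2 * b * (x * y) + c * (y * y))
      = (a * x + b * y) * (a * x + b * y) + (a * c - b * b) * (y * y)"
    by (simp add: algebra_simps)
  have "0 \<le> (a * c - b * b) * (y * y)" using assms(2) by simp
  with completed_square have "0 \<le> a * (a * (x * x) + 2 * b * (x * y) + c * (y * y))" by simp
  then show "0 \<le> a * (x * x) + 2 * b * (x * y) + c * (y * y)"
    using assms(1) by (simp add: zero_le_mult_iff)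
  assume "x \<noteq> 0 \<or> y \<noteq> 0"
  have "0 < (a * x + b * y) * (a * x + b * y) + (a * c - b * b) * (y * y)"
  proof (cases "y = 0")
    case True
    with \<open>x \<noteq> 0 \<or> y \<noteq> 0\<close> assms(1) have "a * x \<noteq> 0" by simp
    then have "0 < (a * x) * (a * x)" by (metis not_real_square_gt_zero)
    with True show ?thesis by simp
  next
    case False
    then have "0 < y * y" by (metis not_real_square_gt_zero)
    with assms(2) have "0 < (a * c - b * b) * (y * y)" by (simp add: mult_pos_pos)
    then show ?thesis by (simp add: add_nonneg_pos)
  qed
  with completed_square have "0 < a * (a * (x * x) + 2 * b * (x * y) + c * (y * y))" by simp
  then show "0 < a * (x * x) + 2 * b * (x * y) + c * (y * y)"
    using assms(1) by (simp add: zero_less_mult_iff)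
qed

lemma hermitian_form_2x2_pos:
  fixes a b c :: real and p q :: complex
  defines "H \<equiv> Re (cnj p * complex_of_real a * p + cnj p * complex_of_real b * q
                  + cnj q * complex_of_real b * p + cnj q * complex_of_real c * q)"
  assumes "0 < a" "b * b < a * c"
  shows "0 \<le> H" and "p \<noteq> 0 \<or> q \<noteq> 0 \<Longrightarrow> 0 < H"
proof -
  have H: "H = (a * (Re p * Re p) + 2 * b * (Re p * Re q) + c * (Re q * Re q))
             + (a * (Im p * Im p) + 2 * b * (Im p * Im q) + c * (Im q * Im q))"
    unfolding H_def by (simp add: algebra_simps)
  note form = quadratic_form_2x2_pos[OF assms(2,3)]
  show "0 \<le> H" unfolding H using form(1)[of "Re p" "Re q"] form(1)[of "Im p" "Im q"] by linarith
  assume "p \<noteq> 0 \<or> q \<noteq> 0"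
  then have "(Re p \<noteq> 0 \<or> Re q \<noteq> 0) \<or> (Im p \<noteq> 0 \<or> Im q \<noteq> 0)" by (auto simp: complex_eq_iff)
  then show "0 < H" unfolding H
    using form[of "Re p" "Re q"] form[of "Im p" "Im q"] by linarith
qed

lemma quadratic_form_block_circulant:
  fixes n :: nat and x1 x2 :: "real vec"
  defines "p \<equiv> dft_mat n *\<^sub>v of_real_vec x1" and "q \<equiv> dft_mat n *\<^sub>v of_real_vec x2"
  assumes even: "even_symbol n a" "even_symbol n b" "even_symbol n c"
    and x12: "x1 \<in> carrier_vec n" "x2 \<in> carrier_vec n"
  shows "(x1 @\<^sub>v x2) \<bullet> (block_circulant n a b b c *\<^sub>v (x1 @\<^sub>v x2))
    = (\<Sum>k<n. Re (cnj (p $ k) * complex_of_real (a k) * p $ k + cnj (p $ k) * complex_of_real (b k) * q $ k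
                 + cnj (q $ k) * complex_of_real (b k) * p $ k + cnj (q $ k) * complex_of_real (c k) * q $ k))"
proof -
  have "(x1 @\<^sub>v x2) \<bullet> (block_circulant n a b b c *\<^sub>v (x1 @\<^sub>v x2))
      = x1 \<bullet> (real_circulant n a *\<^sub>v x1 + real_circulant n b *\<^sub>v x2)
        + x2 \<bullet> (real_circulant n b *\<^sub>v x1 + real_circulant n c *\<^sub>v x2)"
    unfolding block_circulant_mult_append_vec[OF x12] by (rule scalar_prod_append) (use x12 in auto)
  also have "\<dots> = x1 \<bullet> (real_circulant n a *\<^sub>v x1) + x1 \<bullet> (real_circulant n b *\<^sub>v x2)
      + (x2 \<bullet> (real_circulant n b *\<^sub>v x1) + x2 \<bullet> (real_circulant n c *\<^sub>v x2))"
    using x12 by (simp add: scalar_prod_add_distrib[of _ n])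
  also have "\<dots> = Re (complex_of_real \<dots>)" by simp
  also have "complex_of_real (x1 \<bullet> (real_circulant n a *\<^sub>v x1) + x1 \<bullet> (real_circulant n b *\<^sub>v x2)
      + (x2 \<bullet> (real_circulant n b *\<^sub>v x1) + x2 \<bullet> (real_circulant n c *\<^sub>v x2)))
    = (\<Sum>k<n. cnj (p $ k) * complex_of_real (a k) * p $ k + cnj (p $ k) * complex_of_real (b k) * q $ k
        + cnj (q $ k) * complex_of_real (b k) * p $ k + cnj (q $ k) * complex_of_real (c k) * q $ k)"
    unfolding of_real_add p_def q_def
      quadratic_form_real_circulant[OF even(1) x12(1,1)] quadratic_form_real_circulant[OF even(2) x12(1,2)]
      quadratic_form_real_circulant[OF even(2) x12(2,1)] quadratic_form_real_circulant[OF even(3) x12(2,2)]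
    by (simp add: sum.distrib add.assoc)
  finally show ?thesis by (simp only: Re_sum)
qed

lemma sym_pos_def_block_circulant:
  assumes even: "even_symbol n a" "even_symbol n b" "even_symbol n c"
    and pos: "\<And>k. k < n \<Longrightarrow> 0 < a k \<and> b k * b k < a k * c k"
  shows "sym_pos_def_mat (n + n) (block_circulant n a b b c)"
  unfolding sym_pos_def_mat_def
proof (intro conjI ballI impI)
  show "block_circulant n a b b c \<in> carrier_mat (n + n) (n + n)" by simp
  show "transpose_mat (block_circulant n a b b c) = block_circulant n a b b c"
    by (simp add: transpose_block_circulant)
  fix x :: "real vec" assume x: "x \<in> carrier_vec (n + n)" and "x \<noteq> 0\<^sub>v (n + n)"
  obtain x1 x2 where x12: "x1 \<in> carrier_vec n" "x2 \<in> carrier_vec n" "x = x1 @\<^sub>v x2"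
    using carrier_vec_append_cases[OF x] .
  let ?p = "dft_mat n *\<^sub>v of_real_vec x1" and ?q = "dft_mat n *\<^sub>v of_real_vec x2"
  have form: "x \<bullet> (block_circulant n a b b c *\<^sub>v x) = (\<Sum>k<n. Re (cnj (?p $ k) * complex_of_real (a k) * ?p $ k
      + cnj (?p $ k) * complex_of_real (b k) * ?q $ k + cnj (?q $ k) * complex_of_real (b k) * ?p $ k
      + cnj (?q $ k) * complex_of_real (c k) * ?q $ k))" (is "_ = (\<Sum>k<n. ?H k)")
    unfolding x12(3) by (rule quadratic_form_block_circulant[OF even x12(1,2)])
  have "x1 \<noteq> 0\<^sub>v n \<or> x2 \<noteq> 0\<^sub>v n"
    using \<open>x \<noteq> 0\<^sub>v (n + n)\<close> x12 by auto
  then obtain k where k: "k < n" and nz: "?p $ k \<noteq> 0 \<or> ?q $ k \<noteq> 0"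
    using dft_mat_vec_nonzero[of "of_real_vec x1" n] dft_mat_vec_nonzero[of "of_real_vec x2" n] x12
    by (auto simp: of_real_hom.vec_hom_zero_iff)
  have "0 < ?H k"
    using pos[OF k] nz by (intro hermitian_form_2x2_pos(2)) auto
  moreover have "0 \<le> ?H j" if "j < n" for j
    using pos[OF that] by (intro hermitian_form_2x2_pos(1)) auto
  ultimately show "0 < x \<bullet> (block_circulant n a b b c *\<^sub>v x)"
    unfolding form using k by (intro sum_pos2) auto
qed

lemma det_2x2_eq_0_if_singular:
  fixes a b c d x y :: "'a :: field"
  assumes "a * x + b * y = 0" "c * x + d * y = 0" "x \<noteq> 0 \<or> y \<noteq> 0"
  shows "a * d - b * c = 0"
proof -
  have "(a * d - b * c) * x = d * (a * x + b * y) - b * (c * x + d * y)"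
    and "(a * d - b * c) * y = a * (c * x + d * y) - c * (a * x + b * y)"
    by (simp_all add: algebra_simps)
  with assms show ?thesis by auto
qed

lemma eigenvalue_block_circulant:
  assumes "even_symbol n a" "even_symbol n b" "even_symbol n c" "even_symbol n d"
    and "eigenvalue (of_real_mat (block_circulant n a b c d)) z"
  shows "\<exists>k<n. (complex_of_real (a k) - z) * (complex_of_real (d k) - z)
                = complex_of_real (b k) * complex_of_real (c k)"
proof -
  obtain v where v: "v \<in> carrier_vec (n + n)" "v \<noteq> 0\<^sub>v (n + n)"
    "of_real_mat (block_circulant n a b c d) *\<^sub>v v = z \<cdot>\<^sub>v v"
    using assms(5) unfolding eigenvalue_def eigenvector_def by auto
  obtain v1 v2 where v12: "v1 \<in> carrier_vec n" "v2 \<in> carrier_vec n" "v = v1 @\<^sub>v v2"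
    using carrier_vec_append_cases[OF v(1)] .
  have "of_real_mat (block_circulant n a b c d) *\<^sub>v v
      = (circ_of_symbol n a *\<^sub>v v1 + circ_of_symbol n b *\<^sub>v v2)
        @\<^sub>v (circ_of_symbol n c *\<^sub>v v1 + circ_of_symbol n d *\<^sub>v v2)"
    unfolding of_real_block_circulant[OF assms(1-4)] v12(3)
    by (rule four_block_mat_mult_vec) (use v12 in auto)
  moreover have "z \<cdot>\<^sub>v v = (z \<cdot>\<^sub>v v1) @\<^sub>v (z \<cdot>\<^sub>v v2)"
    unfolding v12(3) by (rule eq_vecI) auto
  ultimately have "(circ_of_symbol n a *\<^sub>v v1 + circ_of_symbol n b *\<^sub>v v2)
        @\<^sub>v (circ_of_symbol n c *\<^sub>v v1 + circ_of_symbol n d *\<^sub>v v2)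
      = (z \<cdot>\<^sub>v v1) @\<^sub>v (z \<cdot>\<^sub>v v2)"
    using v(3) by simp
  then have eq1: "circ_of_symbol n a *\<^sub>v v1 + circ_of_symbol n b *\<^sub>v v2 = z \<cdot>\<^sub>v v1"
    and eq2: "circ_of_symbol n d *\<^sub>v v2 + circ_of_symbol n c *\<^sub>v v1 = z \<cdot>\<^sub>v v2"
    using v12 by (auto simp: append_vec_eq[of _ n] comm_add_vec[of _ n])
  let ?p = "dft_mat n *\<^sub>v v1" and ?q = "dft_mat n *\<^sub>v v2"
  have "v1 \<noteq> 0\<^sub>v n \<or> v2 \<noteq> 0\<^sub>v n"
    using v(2) v12 by auto
  then obtain k where k: "k < n" and nz: "?p $ k \<noteq> 0 \<or> ?q $ k \<noteq> 0"
    using dft_mat_vec_nonzero v12 by blast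
  have modes: "(complex_of_real (a k) - z) * ?p $ k + complex_of_real (b k) * ?q $ k = 0"
    "complex_of_real (c k) * ?p $ k + (complex_of_real (d k) - z) * ?q $ k = 0"
    using dft_mode_equation[OF v12(1,2) k eq1] dft_mode_equation[OF v12(2,1) k eq2]
    by (simp_all add: algebra_simps)
  have "(complex_of_real (a k) - z) * (complex_of_real (d k) - z)
      - complex_of_real (b k) * complex_of_real (c k) = 0"
    by (rule det_2x2_eq_0_if_singular[OF modes nz])
  with k show ?thesis by auto
qed

lemma quadratic_root_Re_neg:
  fixes z :: complex
  assumes "0 < p" "0 < q" "z * z + complex_of_real p * z + complex_of_real q = 0"
  shows "Re z < 0"
proof -
  have re: "Re z * Re z - Im z * Im z + p * Re z + q = 0"
    and im: "Im z * (2 * Re z + p) = 0"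
    using arg_cong[OF assms(3), of Re] arg_cong[OF assms(3), of Im] by (simp_all add: algebra_simps)
  show ?thesis
  proof (cases "Im z = 0")
    case True
    with re have "Re z * Re z + p * Re z + q = 0" by simp
    show ?thesis
    proof (rule ccontr)
      assume "\<not> Re z < 0"
      then have "0 < Re z * Re z + p * Re z + q"
        using assms(1,2) by (simp add: add_nonneg_pos)
      with \<open>Re z * Re z + p * Re z + q = 0\<close> show False by simp
    qed
  next
    case False
    with im have "2 * Re z + p = 0" by simp
    with assms(1) show ?thesis by simp
  qed
qed

lemma hurwitz_block_circulant:
  assumes "even_symbol n a" "even_symbol n b" "even_symbol n c" "even_symbol n d"
    and stable: "\<And>k. k < n \<Longrightarrow> a k + d k < 0 \<and> b k * c k < a k * d k"
  shows "hurwitz (block_circulant n a b c d)"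
  unfolding hurwitz_def
proof (intro allI impI)
  fix z assume "eigenvalue (of_real_mat (block_circulant n a b c d)) z"
  then obtain k where k: "k < n" and char: "(complex_of_real (a k) - z) * (complex_of_real (d k) - z)
      = complex_of_real (b k) * complex_of_real (c k)"
    using eigenvalue_block_circulant[OF assms(1-4)] by blast
  have "z * z + complex_of_real (- (a k + d k)) * z + complex_of_real (a k * d k - b k * c k) = 0"
    using char by (simp add: algebra_simps)
  with stable[OF k] show "Re z < 0"
    by (intro quadratic_root_Re_neg[of "- (a k + d k)" "a k * d k - b k * c k"]) auto
qed

section \<open>Uniqueness of the stabilizing Riccati solution\<close>

lemma schur_form_eigenvalues:
  fixes M :: "complex mat"
  assumes M: "M \<in> carrier_mat m m"
  obtains T P Q where "similar_mat_wit M T P Q" "upper_triangular T" "T \<in> carrier_mat m m"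
    "\<And>i. i < m \<Longrightarrow> eigenvalue M (T $$ (i, i))"
proof -
  obtain es where char: "char_poly M = (\<Prod>a\<leftarrow>es. [:- a, 1:])"
    using char_poly_factorized[OF M] by blast
  obtain T P Q where "schur_decomposition M es = (T, P, Q)" by (metis prod_cases3)
  from schur_decomposition[OF M char this]
  have sim: "similar_mat_wit M T P Q" and ut: "upper_triangular T" and diag: "diag_mat T = es" by auto
  have T: "T \<in> carrier_mat m m" using similar_mat_witD2[OF M sim] by auto
  have "eigenvalue M (T $$ (i, i))" if "i < m" for i
  proof -
    have "T $$ (i, i) \<in> set es" using that T unfolding diag[symmetric] diag_mat_def by simp
    then have "poly (char_poly M) (T $$ (i, i)) = 0"
      unfolding char by (induction es) auto
    then show ?thesis using eigenvalue_root_char_poly[OF M] by simp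
  qed
  with that sim ut T show ?thesis by blast
qed

lemma sylvester_upper_triangular_zero:
  fixes T1 T2 Y :: "'a :: field mat"
  assumes T1: "T1 \<in> carrier_mat m m" and T2: "T2 \<in> carrier_mat m m" and Y: "Y \<in> carrier_mat m m"
    and "upper_triangular T1" "upper_triangular T2"
    and diag: "\<And>i j. i < m \<Longrightarrow> j < m \<Longrightarrow> T1 $$ (i, i) + T2 $$ (j, j) \<noteq> 0"
    and eq: "T1 * Y + Y * transpose_mat T2 = 0\<^sub>m m m"
  shows "Y = 0\<^sub>m m m"
proof -
  have "Y $$ (i, j) = 0" if "i < m" "j < m" for i j
    using that
  proof (induction "(m - i) + (m - j)" arbitrary: i j rule: less_induct)
    case less
    note i = less.prems(1) and j = less.prems(2)
    have below: "Y $$ (k, j) = 0" if "i < k" "k < m" for k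
      using less.hyps[of k j] that j by auto
    have right: "Y $$ (i, k) = 0" if "j < k" "k < m" for k
      using less.hyps[of i k] that i by auto
    have col: "T1 $$ (i, k) * Y $$ (k, j) = (if k = i then T1 $$ (i, i) * Y $$ (i, j) else 0)"
      if "k < m" for k
      using upper_triangularD[OF assms(4), of k i] T1 i below[OF _ that] by (cases k i rule: linorder_cases) auto
    have row: "Y $$ (i, k) * T2 $$ (j, k) = (if k = j then Y $$ (i, j) * T2 $$ (j, j) else 0)"
      if "k < m" for k
      using upper_triangularD[OF assms(5), of k j] T2 j right[OF _ that] by (cases k j rule: linorder_cases) auto
    have "(\<Sum>k<m. T1 $$ (i, k) * Y $$ (k, j)) = T1 $$ (i, i) * Y $$ (i, j)"
      using i by (subst sum.cong[OF refl col]) simp_all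
    moreover have "(\<Sum>k<m. Y $$ (i, k) * T2 $$ (j, k)) = Y $$ (i, j) * T2 $$ (j, j)"
      using j by (subst sum.cong[OF refl row]) simp_all
    moreover have "(T1 * Y + Y * transpose_mat T2) $$ (i, j)
        = (\<Sum>k<m. T1 $$ (i, k) * Y $$ (k, j)) + (\<Sum>k<m. Y $$ (i, k) * T2 $$ (j, k))"
      using i j T1 T2 Y by (simp add: scalar_prod_def lessThan_atLeast0)
    ultimately have "T1 $$ (i, i) * Y $$ (i, j) + Y $$ (i, j) * T2 $$ (j, j) = 0"
      using eq i j by simp
    then have "(T1 $$ (i, i) + T2 $$ (j, j)) * Y $$ (i, j) = 0"
      by (simp add: algebra_simps)
    with diag[OF i j] show ?case by simp
  qed
  with Y show ?thesis by (intro eq_matI) auto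
qed

lemma sylvester_similarity_transform:
  fixes M1 M2 X P1 Q1 P2 Q2 :: "'a :: comm_ring_1 mat"
  assumes carrier: "M1 \<in> carrier_mat m m" "M2 \<in> carrier_mat m m" "X \<in> carrier_mat m m"
    "P1 \<in> carrier_mat m m" "Q1 \<in> carrier_mat m m" "P2 \<in> carrier_mat m m" "Q2 \<in> carrier_mat m m"
    and inv: "P1 * Q1 = 1\<^sub>m m" "P2 * Q2 = 1\<^sub>m m"
  shows "(Q1 * M1 * P1) * (Q1 * X * transpose_mat Q2) + (Q1 * X * transpose_mat Q2) * transpose_mat (Q2 * M2 * P2)
    = Q1 * (M1 * X + X * transpose_mat M2) * transpose_mat Q2"
proof -
  have cancel1: "P1 * (Q1 * Z) = Z" if "Z \<in> carrier_mat m m" for Z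
    using carrier that inv by (simp add: assoc_mult_mat[symmetric, of _ m m _ m _ m])
  have cancel2: "transpose_mat Q2 * (transpose_mat P2 * Z) = Z" if "Z \<in> carrier_mat m m" for Z
    using carrier that inv
    by (simp add: assoc_mult_mat[symmetric, of _ m m _ m _ m] transpose_mult[symmetric, of _ m m])
  have "transpose_mat (Q2 * M2 * P2) = transpose_mat P2 * transpose_mat (Q2 * M2)"
    by (rule transpose_mult) (use carrier in auto)
  also have "transpose_mat (Q2 * M2) = transpose_mat M2 * transpose_mat Q2"
    by (rule transpose_mult) (use carrier in auto)
  finally show ?thesis
    using carrier
    by (simp add: assoc_mult_mat[of _ m m _ m _ m] cancel1 cancel2 mult_add_distrib_mat[of _ m m _ m]
        add_mult_distrib_mat[of _ m m _ _ m])
qed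

lemma sylvester_equation_zero:
  fixes M1 M2 X :: "complex mat"
  assumes carrier: "M1 \<in> carrier_mat m m" "M2 \<in> carrier_mat m m" "X \<in> carrier_mat m m"
    and spectra: "\<And>x y. eigenvalue M1 x \<Longrightarrow> eigenvalue M2 y \<Longrightarrow> x + y \<noteq> 0"
    and eq: "M1 * X + X * transpose_mat M2 = 0\<^sub>m m m"
  shows "X = 0\<^sub>m m m"
proof -
  obtain T1 P1 Q1 where sim1: "similar_mat_wit M1 T1 P1 Q1" and "upper_triangular T1"
    and T1: "T1 \<in> carrier_mat m m" and ev1: "\<And>i. i < m \<Longrightarrow> eigenvalue M1 (T1 $$ (i, i))"
    using schur_form_eigenvalues[OF carrier(1)] by blast
  obtain T2 P2 Q2 where sim2: "similar_mat_wit M2 T2 P2 Q2" and "upper_triangular T2"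
    and T2: "T2 \<in> carrier_mat m m" and ev2: "\<And>i. i < m \<Longrightarrow> eigenvalue M2 (T2 $$ (i, i))"
    using schur_form_eigenvalues[OF carrier(2)] by blast
  note w1 = similar_mat_witD2[OF carrier(1) sim1] and w2 = similar_mat_witD2[OF carrier(2) sim2]
  note w1' = similar_mat_witD2[OF T1 similar_mat_wit_sym[OF sim1]]
    and w2' = similar_mat_witD2[OF T2 similar_mat_wit_sym[OF sim2]]
  define Y where "Y = Q1 * X * transpose_mat Q2"
  have Y: "Y \<in> carrier_mat m m" unfolding Y_def using w1 w2 carrier by auto
  have "T1 * Y + Y * transpose_mat T2 = Q1 * (M1 * X + X * transpose_mat M2) * transpose_mat Q2"
    unfolding Y_def w1'(3) w2'(3) using carrier w1 w2
    by (intro sylvester_similarity_transform) auto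
  also have "\<dots> = 0\<^sub>m m m" unfolding eq using w1 w2 by simp
  finally have "Y = 0\<^sub>m m m"
    using sylvester_upper_triangular_zero[OF T1 T2 Y \<open>upper_triangular T1\<close> \<open>upper_triangular T2\<close>]
      spectra ev1 ev2 by blast
  have "transpose_mat Q2 * transpose_mat P2 = 1\<^sub>m m"
    using transpose_mult[of P2 m m Q2 m] w2 by simp
  moreover have "P1 * Y * transpose_mat P2 = (P1 * Q1) * X * (transpose_mat Q2 * transpose_mat P2)"
    unfolding Y_def using carrier w1(6,7) w2(6,7) by (simp add: assoc_mult_mat[of _ m m _ m _ m])
  ultimately have "X = P1 * Y * transpose_mat P2" using w1(1) carrier by simp
  with \<open>Y = 0\<^sub>m m m\<close> show ?thesis using w1 w2 by simp
qed

lemma riccati_difference_equation: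
  fixes A G R S1 S2 :: "'a :: comm_ring_1 mat"
  assumes carrier: "A \<in> carrier_mat N N" "G \<in> carrier_mat N N" "R \<in> carrier_mat N N"
    "S1 \<in> carrier_mat N N" "S2 \<in> carrier_mat N N"
    and sym: "transpose_mat G = G" "transpose_mat S2 = S2"
    and ric1: "A * S1 + S1 * transpose_mat A + R - S1 * G * S1 = 0\<^sub>m N N"
    and ric2: "A * S2 + S2 * transpose_mat A + R - S2 * G * S2 = 0\<^sub>m N N"
  shows "(A - S1 * G) * (S1 - S2) + (S1 - S2) * transpose_mat (A - S2 * G) = 0\<^sub>m N N"
proof -
  have "transpose_mat (A - S2 * G) = transpose_mat A - G * S2"
    using carrier sym by (simp add: transpose_minus[of _ N N] transpose_mult[of _ N N])
  moreover have "(A - S1 * G) * (S1 - S2) = A * S1 - S1 * G * S1 - (A * S2 - S1 * G * S2)"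
    using carrier by (simp add: minus_carrier_mat mult_minus_distrib_mat[of _ N N _ N] minus_mult_distrib_mat[of _ N N _ _ N])
  moreover have "(S1 - S2) * (transpose_mat A - G * S2)
      = S1 * transpose_mat A - S2 * transpose_mat A - (S1 * G * S2 - S2 * G * S2)"
    using carrier by (simp add: minus_carrier_mat mult_minus_distrib_mat[of _ N N _ N] minus_mult_distrib_mat[of _ N N _ _ N]
        assoc_mult_mat[of _ N N _ N _ N])
  ultimately have "(A - S1 * G) * (S1 - S2) + (S1 - S2) * transpose_mat (A - S2 * G)
      = (A * S1 - S1 * G * S1 - (A * S2 - S1 * G * S2))
        + (S1 * transpose_mat A - S2 * transpose_mat A - (S1 * G * S2 - S2 * G * S2))"
    by simp
  also have "\<dots> = 0\<^sub>m N N"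
  proof (rule eq_matI)
    fix i j assume "i < dim_row (0\<^sub>m N N :: 'a mat)" "j < dim_col (0\<^sub>m N N :: 'a mat)"
    then have ij: "i < N" "j < N" by auto
    have "(A * S1 - S1 * G * S1 - (A * S2 - S1 * G * S2)
        + (S1 * transpose_mat A - S2 * transpose_mat A - (S1 * G * S2 - S2 * G * S2))) $$ (i, j)
      = (A * S1 + S1 * transpose_mat A + R - S1 * G * S1) $$ (i, j)
        - (A * S2 + S2 * transpose_mat A + R - S2 * G * S2) $$ (i, j)"
      using carrier ij by (simp add: algebra_simps)
    then show "(A * S1 - S1 * G * S1 - (A * S2 - S1 * G * S2)
        + (S1 * transpose_mat A - S2 * transpose_mat A - (S1 * G * S2 - S2 * G * S2))) $$ (i, j)
      = 0\<^sub>m N N $$ (i, j)"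
      unfolding ric1 ric2 using ij by simp
  qed (use carrier in auto)
  finally show ?thesis .
qed

lemma hurwitz_sylvester_zero:
  fixes M1 M2 X :: "real mat"
  assumes carrier: "M1 \<in> carrier_mat m m" "M2 \<in> carrier_mat m m" "X \<in> carrier_mat m m"
    and "hurwitz M1" "hurwitz M2"
    and eq: "M1 * X + X * transpose_mat M2 = 0\<^sub>m m m"
  shows "X = 0\<^sub>m m m"
proof -
  have "of_real_mat M1 * of_real_mat X + of_real_mat X * transpose_mat (of_real_mat M2)
      = of_real_mat (M1 * X + X * transpose_mat M2)"
    using carrier by (simp add: of_real_mat_add[of _ m m] of_real_hom.mat_hom_mult[of _ m m _ m] map_mat_transpose)
  also have "\<dots> = 0\<^sub>m m m" unfolding eq by simp
  finally have complex_eq: "of_real_mat M1 * of_real_mat X + of_real_mat X * transpose_mat (of_real_mat M2) = 0\<^sub>m m m" .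
  have spectra: "x + y \<noteq> 0" if "eigenvalue (of_real_mat M1) x" "eigenvalue (of_real_mat M2) y" for x y
  proof -
    have "Re x < 0" "Re y < 0" using that assms(4,5) unfolding hurwitz_def by auto
    then have "Re (x + y) < 0" by simp
    then show ?thesis by (auto simp del: plus_complex.sel)
  qed
  have "of_real_mat X = 0\<^sub>m m m"
    by (rule sylvester_equation_zero[OF _ _ _ spectra complex_eq]) (use carrier in auto)
  then have "of_real_mat X = of_real_mat (0\<^sub>m m m)" by simp
  then show ?thesis by (rule of_real_hom.mat_hom_inj)
qed

lemma stabilizing_riccati_sol_unique:
  fixes A B C W S1 S2 :: "real mat"
  assumes A: "A \<in> carrier_mat N N" and B: "B \<in> carrier_mat N mb" and C: "C \<in> carrier_mat p N"
    and W: "W \<in> carrier_mat p p" "transpose_mat W = W"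
    and sol1: "stabilizing_riccati_sol A B C W S1" and sol2: "stabilizing_riccati_sol A B C W S2"
  shows "S1 = S2"
proof -
  define G where "G = transpose_mat C * W * C"
  have G: "G \<in> carrier_mat N N" unfolding G_def using C W by auto
  have "transpose_mat G = transpose_mat C * transpose_mat (transpose_mat C * W)"
    unfolding G_def by (rule transpose_mult) (use C W in auto)
  also have "transpose_mat (transpose_mat C * W) = W * C"
    using transpose_mult[of "transpose_mat C" N p W p] C W by simp
  finally have "transpose_mat G = G"
    unfolding G_def using C W by (simp add: assoc_mult_mat[of _ N p _ p _ N])
  have gain: "S * transpose_mat C * W * C = S * G" if "S \<in> carrier_mat N N" for S
    unfolding G_def using that C W
    by (simp add: assoc_mult_mat[of S N N _ p _ p] assoc_mult_mat[of S N N _ p _ N]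
        assoc_mult_mat[of _ N p _ p _ N])
  have "dim_row A = N" using A by simp
  then have S1: "S1 \<in> carrier_mat N N" "transpose_mat S1 = S1"
    and ric1: "A * S1 + S1 * transpose_mat A + B * transpose_mat B - S1 * G * S1 = 0\<^sub>m N N"
    and hurwitz1: "hurwitz (A - S1 * G)"
    and S2: "S2 \<in> carrier_mat N N" "transpose_mat S2 = S2"
    and ric2: "A * S2 + S2 * transpose_mat A + B * transpose_mat B - S2 * G * S2 = 0\<^sub>m N N"
    and hurwitz2: "hurwitz (A - S2 * G)"
    using sol1 sol2 gain unfolding stabilizing_riccati_sol_def sym_pos_def_mat_def by auto
  have sylvester: "(A - S1 * G) * (S1 - S2) + (S1 - S2) * transpose_mat (A - S2 * G) = 0\<^sub>m N N"
    using A B G S1 S2 \<open>transpose_mat G = G\<close> ric1 ric2 by (intro riccati_difference_equation) auto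
  have diff: "S1 - S2 = 0\<^sub>m N N"
    by (rule hurwitz_sylvester_zero[OF _ _ _ hurwitz1 hurwitz2 sylvester])
      (use A G S1 S2 in \<open>auto simp: minus_carrier_mat\<close>)
  show "S1 = S2"
  proof (rule eq_matI)
    fix i j assume "i < dim_row S2" "j < dim_col S2"
    with diff S1 S2 have "(S1 - S2) $$ (i, j) = 0" by simp
    with \<open>i < dim_row S2\<close> \<open>j < dim_col S2\<close> show "S1 $$ (i, j) = S2 $$ (i, j)" by simp
  qed (use S1 S2 in auto)
qed

section \<open>The filter in Fourier coordinates\<close>

lemma sysA_eq_block_circulant: "sysA n = block_circulant n (\<lambda>k. 0) (\<lambda>k. 1) (Dhat n) (\<lambda>k. 0)"
  unfolding sysA_def block_circulant_def real_circulant_zero real_circulant_one D2_eq_real_circulant ..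

lemma sysB_eq_stacked_circulant: "sysB n = stacked_circulant n (\<lambda>k. 0) (\<lambda>k. 1)"
  unfolding sysB_def stacked_circulant_def real_circulant_zero real_circulant_one ..

lemma transpose_sysC: "transpose_mat (sysC n P4) = stacked_circulant n (\<lambda>k. P4) (\<lambda>k. 0)"
proof -
  have "P4 \<cdot>\<^sub>m 1\<^sub>m n = real_circulant n (\<lambda>k. P4)"
    using real_circulant_smult[of P4 n "\<lambda>k. 1"] by (simp add: real_circulant_one)
  then show ?thesis
    unfolding sysC_def stacked_circulant_def append_rows_def real_circulant_zero
    by (subst transpose_four_block_mat[of _ n n _ n _ 0]) auto
qed

lemma weightW_eq_real_circulant: "weightW n P1 = real_circulant n (\<lambda>k. 1 - P1 * Dhat n k)"
  unfolding weightW_def D2_eq_real_circulant real_circulant_smult real_circulant_one[symmetric]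
    real_circulant_diff ..

lemma sysA_carrier: "sysA n \<in> carrier_mat (n + n) (n + n)"
  and sysB_carrier: "sysB n \<in> carrier_mat (n + n) n"
  and sysC_carrier: "sysC n P4 \<in> carrier_mat n (n + n)"
  and weightW_carrier: "weightW n P1 \<in> carrier_mat n n"
  and transpose_weightW: "transpose_mat (weightW n P1) = weightW n P1"
  using transpose_carrier_mat[of "sysC n P4" "n + n" n]
  by (simp_all add: sysA_eq_block_circulant sysB_eq_stacked_circulant transpose_sysC weightW_eq_real_circulant)

locale kalman_modes =
  fixes P1 P4 :: real
  assumes P1_pos: "0 < P1" and P4_pos: "0 < P4"
begin

text \<open>The functions below take the eigenvalue \<open>d = Dhat n \<kappa>\<close> of \<open>D2\<close> as argument:
  \<open>gain1 d\<close> and \<open>gain2 d\<close> are the two components of the mode gain \<open>L(\<kappa>)\<close>, and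
  \<open>cov11 d\<close>, \<open>cov12 d\<close>, \<open>cov22 d\<close> the entries of the mode-\<open>\<kappa>\<close> block of the Riccati solution.\<close>

definition gain2 :: "real \<Rightarrow> real" where
  "gain2 d = d / P4 + sqrt (d\<^sup>2 / P4\<^sup>2 - P1 * d + 1)"

definition gain1 :: "real \<Rightarrow> real" where
  "gain1 d = sqrt (2 / P4 * gain2 d)"

definition cov11 :: "real \<Rightarrow> real" where
  "cov11 d = gain1 d / (P4 * (1 - P1 * d))"

definition cov12 :: "real \<Rightarrow> real" where
  "cov12 d = gain2 d / (P4 * (1 - P1 * d))"

definition cov22 :: "real \<Rightarrow> real" where
  "cov22 d = cov11 d * (P4 * gain2 d - d)"

context
  fixes d :: real
  assumes d: "d \<le> 0"
begin

lemma weight_pos: "0 < 1 - P1 * d"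
  using mult_nonneg_nonpos[of P1 d] d P1_pos by simp

lemma gain2_pos: "0 < gain2 d"
  and less_P4_gain2: "d < P4 * gain2 d"
  and gain2_quadratic: "P4 * gain2 d ^ 2 - 2 * d * gain2 d = (1 - P1 * d) * P4"
proof -
  define x where "x = d / P4"
  define r where "r = sqrt (d\<^sup>2 / P4\<^sup>2 - P1 * d + 1)"
  have dx: "d = P4 * x" and g: "gain2 d = x + r"
    unfolding x_def r_def gain2_def using P4_pos by simp_all
  have radicand: "d\<^sup>2 / P4\<^sup>2 - P1 * d + 1 = x\<^sup>2 + (1 - P1 * d)"
    unfolding x_def by (simp add: power_divide)
  have "\<bar>x\<bar> < r"
    unfolding r_def radicand using weight_pos by (intro real_less_rsqrt) simp
  then show "0 < gain2 d" unfolding g by linarith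
  have "0 < P4 * r" using \<open>\<bar>x\<bar> < r\<close> P4_pos by simp
  then show "d < P4 * gain2 d"
    unfolding g using dx by (simp add: algebra_simps)
  have r2: "r\<^sup>2 = x\<^sup>2 + (1 - P1 * d)"
    unfolding r_def radicand using weight_pos by (simp add: add_nonneg_nonneg)
  have "P4 * gain2 d ^ 2 - 2 * d * gain2 d = P4 * (x + r) ^ 2 - 2 * (P4 * x) * (x + r)"
    unfolding g using dx by simp
  also have "\<dots> = P4 * (r\<^sup>2 - x\<^sup>2)"
    by (simp add: algebra_simps power2_eq_square)
  finally show "P4 * gain2 d ^ 2 - 2 * d * gain2 d = (1 - P1 * d) * P4"
    unfolding r2 by simp
qed

lemma gain1_pos: "0 < gain1 d"
  unfolding gain1_def using gain2_pos P4_pos by simp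

lemma gain1_square: "P4 * gain1 d ^ 2 = 2 * gain2 d"
  unfolding gain1_def using gain2_pos P4_pos by simp

lemma mode_riccati:
  "cov12 d + cov12 d - gain1 d * P4 * cov11 d = 0"
  "cov22 d + d * cov11 d - gain1 d * P4 * cov12 d = 0"
  "cov22 d + d * cov11 d - gain2 d * P4 * cov11 d = 0"
  "d * cov12 d + d * cov12 d + 1 - gain2 d * P4 * cov12 d = 0"
proof -
  define w where "w = 1 - P1 * d"
  have nz: "P4 \<noteq> 0" "w \<noteq> 0" using P4_pos weight_pos unfolding w_def by auto
  have "cov12 d + cov12 d - gain1 d * P4 * cov11 d = (2 * gain2 d - P4 * gain1 d ^ 2) / (P4 * w)"
    unfolding cov11_def cov12_def w_def[symmetric] using nz by (simp add: field_simps power2_eq_square)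
  then show "cov12 d + cov12 d - gain1 d * P4 * cov11 d = 0"
    by (simp add: gain1_square)
  show "cov22 d + d * cov11 d - gain1 d * P4 * cov12 d = 0"
    and "cov22 d + d * cov11 d - gain2 d * P4 * cov11 d = 0"
    unfolding cov22_def cov11_def cov12_def w_def[symmetric] using nz by (simp_all add: field_simps)
  have "d * cov12 d + d * cov12 d + 1 - gain2 d * P4 * cov12 d
      = 1 - (P4 * gain2 d ^ 2 - 2 * d * gain2 d) / (P4 * w)"
    unfolding cov12_def w_def[symmetric] using nz by (simp add: field_simps power2_eq_square)
  then show "d * cov12 d + d * cov12 d + 1 - gain2 d * P4 * cov12 d = 0"
    using nz unfolding w_def by (simp add: gain2_quadratic)
qed

lemma mode_cov_pos_def: "0 < cov11 d" "cov12 d * cov12 d < cov11 d * cov22 d"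
proof -
  define w where "w = 1 - P1 * d"
  have w: "0 < w" unfolding w_def by (rule weight_pos)
  show "0 < cov11 d"
    unfolding cov11_def w_def[symmetric] using gain1_pos w P4_pos by simp
  have g1: "gain1 d ^ 2 = 2 * gain2 d / P4"
    using gain1_square P4_pos by (simp add: field_simps)
  have "gain1 d ^ 2 * (P4 * gain2 d - d) - gain2 d ^ 2 = (P4 * gain2 d ^ 2 - 2 * d * gain2 d) / P4"
    unfolding g1 using P4_pos by (simp add: field_simps power2_eq_square)
  also have "\<dots> = w"
    unfolding w_def using P4_pos by (simp add: gain2_quadratic)
  finally have numerator: "gain1 d ^ 2 * (P4 * gain2 d - d) - gain2 d ^ 2 = w" .
  have "cov11 d * cov22 d - cov12 d * cov12 d
      = (gain1 d ^ 2 * (P4 * gain2 d - d) - gain2 d ^ 2) / (P4 * w) ^ 2"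
    unfolding cov22_def cov11_def cov12_def w_def[symmetric] using w P4_pos
    by (simp add: field_simps power2_eq_square)
  also have "\<dots> > 0" unfolding numerator using w P4_pos by simp
  finally show "cov12 d * cov12 d < cov11 d * cov22 d" by simp
qed

end

definition riccati_sol :: "nat \<Rightarrow> real mat" where
  "riccati_sol n = block_circulant n (\<lambda>k. cov11 (Dhat n k)) (\<lambda>k. cov12 (Dhat n k))
     (\<lambda>k. cov12 (Dhat n k)) (\<lambda>k. cov22 (Dhat n k))"

lemma riccati_sol_gain:
  "riccati_sol n * transpose_mat (sysC n P4) * weightW n P1
    = stacked_circulant n (\<lambda>k. gain1 (Dhat n k)) (\<lambda>k. gain2 (Dhat n k))"
proof -
  have "riccati_sol n * transpose_mat (sysC n P4) * weightW n P1
      = stacked_circulant n (\<lambda>k. (cov11 (Dhat n k) * P4 + cov12 (Dhat n k) * 0) * (1 - P1 * Dhat n k))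
          (\<lambda>k. (cov12 (Dhat n k) * P4 + cov22 (Dhat n k) * 0) * (1 - P1 * Dhat n k))"
    unfolding riccati_sol_def transpose_sysC weightW_eq_real_circulant
    by (simp add: block_circulant_mult_stacked stacked_circulant_mult)
  also have "\<dots> = stacked_circulant n (\<lambda>k. gain1 (Dhat n k)) (\<lambda>k. gain2 (Dhat n k))"
  proof -
    have "cov11 (Dhat n k) * P4 * (1 - P1 * Dhat n k) = gain1 (Dhat n k)"
      and "cov12 (Dhat n k) * P4 * (1 - P1 * Dhat n k) = gain2 (Dhat n k)" for k
      using weight_pos[OF Dhat_nonpos, of n k] P4_pos by (simp_all add: cov11_def cov12_def)
    then show ?thesis by (intro stacked_circulant_cong) simp_all
  qed
  finally show ?thesis .
qed

lemma riccati_sol_gain_mult_sysC: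
  "riccati_sol n * transpose_mat (sysC n P4) * weightW n P1 * sysC n P4
    = block_circulant n (\<lambda>k. gain1 (Dhat n k) * P4) (\<lambda>k. 0) (\<lambda>k. gain2 (Dhat n k) * P4) (\<lambda>k. 0)"
proof -
  have "sysC n P4 = transpose_mat (stacked_circulant n (\<lambda>k. P4) (\<lambda>k. 0))"
    by (metis transpose_sysC transpose_transpose)
  then show ?thesis
    unfolding riccati_sol_gain by (simp add: stacked_circulant_mult_transpose)
qed

lemma riccati_equation_riccati_sol:
  "sysA n * riccati_sol n + riccati_sol n * transpose_mat (sysA n) + sysB n * transpose_mat (sysB n)
     - riccati_sol n * transpose_mat (sysC n P4) * weightW n P1 * sysC n P4 * riccati_sol n
   = 0\<^sub>m (n + n) (n + n)"
proof -
  have "sysA n * riccati_sol n + riccati_sol n * transpose_mat (sysA n) + sysB n * transpose_mat (sysB n)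
     - riccati_sol n * transpose_mat (sysC n P4) * weightW n P1 * sysC n P4 * riccati_sol n
   = block_circulant n (\<lambda>k. 0) (\<lambda>k. 0) (\<lambda>k. 0) (\<lambda>k. 0)"
    unfolding riccati_sol_gain_mult_sysC
    unfolding sysA_eq_block_circulant sysB_eq_stacked_circulant riccati_sol_def
    by (simp add: block_circulant_mult transpose_block_circulant stacked_circulant_mult_transpose
        block_circulant_add block_circulant_diff, intro block_circulant_cong)
      (use mode_riccati[OF Dhat_nonpos] in \<open>simp_all add: algebra_simps\<close>)
  then show ?thesis by (simp add: block_circulant_zero)
qed

lemma riccati_sol_sym_pos_def: "sym_pos_def_mat (n + n) (riccati_sol n)"
  unfolding riccati_sol_def
  by (rule sym_pos_def_block_circulant) (simp_all add: mode_cov_pos_def[OF Dhat_nonpos])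

lemma closed_loop_hurwitz:
  "hurwitz (sysA n - riccati_sol n * transpose_mat (sysC n P4) * weightW n P1 * sysC n P4)"
  unfolding riccati_sol_gain_mult_sysC sysA_eq_block_circulant block_circulant_diff
proof (rule hurwitz_block_circulant)
  fix k
  show "(0 - gain1 (Dhat n k) * P4) + (0 - 0) < 0
    \<and> (1 - 0) * (Dhat n k - gain2 (Dhat n k) * P4) < (0 - gain1 (Dhat n k) * P4) * (0 - 0)"
    using gain1_pos[OF Dhat_nonpos] less_P4_gain2[OF Dhat_nonpos] P4_pos by (simp add: mult.commute)
qed simp_all

lemma riccati_sol_stabilizing:
  "stabilizing_riccati_sol (sysA n) (sysB n) (sysC n P4) (weightW n P1) (riccati_sol n)"
  unfolding stabilizing_riccati_sol_def
  using riccati_sol_sym_pos_def riccati_equation_riccati_sol closed_loop_hurwitz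
  by (simp add: sysA_eq_block_circulant)

lemma stabilizing_riccati_sol_eq_riccati_sol:
  "stabilizing_riccati_sol (sysA n) (sysB n) (sysC n P4) (weightW n P1) S \<Longrightarrow> S = riccati_sol n"
  using stabilizing_riccati_sol_unique[OF sysA_carrier sysB_carrier sysC_carrier weightW_carrier
      transpose_weightW _ riccati_sol_stabilizing] .

lemma L0hat_eq_gain2: "L0hat n P1 P4 \<kappa> = gain2 (Dhat n \<kappa>)"
  unfolding L0hat_def gain2_def ..

end

theorem lemma4:
  fixes n :: nat and P1 P4 :: real
  assumes "n \<ge> 2" and "P1 > 0" and "P4 > 0"
  shows "\<exists>L. kalman_gain (sysA n) (sysB n) (sysC n P4) (weightW n P1) L
           \<and> (\<forall>L'. kalman_gain (sysA n) (sysB n) (sysC n P4) (weightW n P1) L' \<longrightarrow> L' = L)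
           \<and> map_mat complex_of_real L =
               circ_of_symbol n (\<lambda>\<kappa>. sqrt (2 / P4 * L0hat n P1 P4 \<kappa>))
               @\<^sub>r circ_of_symbol n (L0hat n P1 P4)"
proof -
  interpret kalman_modes P1 P4 using assms(2,3) by unfold_locales
  define L where "L = riccati_sol n * transpose_mat (sysC n P4) * weightW n P1"
  have "kalman_gain (sysA n) (sysB n) (sysC n P4) (weightW n P1) L"
    unfolding kalman_gain_def L_def using riccati_sol_stabilizing by blast
  moreover have "L' = L" if "kalman_gain (sysA n) (sysB n) (sysC n P4) (weightW n P1) L'" for L'
    using that stabilizing_riccati_sol_eq_riccati_sol unfolding kalman_gain_def L_def by blast
  moreover have "map_mat complex_of_real L =
      circ_of_symbol n (\<lambda>\<kappa>. sqrt (2 / P4 * L0hat n P1 P4 \<kappa>)) @\<^sub>r circ_of_symbol n (L0hat n P1 P4)"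
    unfolding L_def riccati_sol_gain L0hat_eq_gain2 gain1_def[symmetric]
    by (simp add: of_real_stacked_circulant)
  ultimately show ?thesis by blast
qed

end
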